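(* Let $n$ and $s$ be integers with $\gcd(s,n)=1$ and let $\mathcal C$ be an $\mathbb F_{q^n}$-subspace of $\mathcal L_{n,q}$ of dimension $k>2$. Let $V:=\mathcal C\cap\mathcal C^{[s]}$. Suppose $\dim V=k-2$ and $\mathcal C\cap\mathcal U_1=\{0\}$. Then: (1) if $\dim(V\cap V^{[s]})=k-3$, there exist $p(x),q(x)\in\mathcal C$ such that \[\mathcal C=\langle p(x),p(x)^{[s]},\ldots,p(x)^{[s(k-2)]}\rangle_{\mathbb F_{q^n}}\oplus\langle q(x)\rangle_{\mathbb F_{q^n}};\] (2) if $\dim(V\cap V^{[s]})=k-4$, there exist $p(x),q(x)\in\mathcal C$ and integers $i,j\ge2$ with $i+j=k$ such that \[\mathcal C=\langle p(x),p(x)^{[s]},\ldots,p(x)^{[s(i-1)]}\rangle_{\mathbb F_{q^n}}\oplus\langle q(x),q(x)^{[s]},\ldots,q(x)^{[s(j-1)]}\rangle_{\mathbb F_{q^n}}.\]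
   Context: $q$ is a prime power, $[i]:=q^i$. $\mathcal L_{n,q}$ is the $\mathbb F_{q^n}$-vector space of linearized polynomials $f(x)=\sum_{i=0}^{n-1}a_ix^{[i]}$, $a_i\in\mathbb F_{q^n}$, identified with $\mathbb F_q$-linear maps of $\mathbb F_{q^n}$ (rank = dimension of the image over $\mathbb F_q$). For $f(x)=\sum_i a_ix^{[i]}$, $f(x)^{[j]}:=x^{[j]}\circ f(x)=\sum_i a_i^{[j]}x^{[(i+j)\bmod n]}$, and for a subset $W$, $W^{[j]}=\{f^{[j]}\colon f\in W\}$. $\mathcal U_1$ is the set of elements of $\mathcal L_{n,q}$ of rank at most one. *)

theory Defs
  imports Main HOL.Vector_Spaces "HOL-Computational_Algebra.Primes" "HOL-Library.Function_Algebras"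
begin

text \<open>The field F_{q^n} is a finite field type 'a with CARD('a) = q^n.
  A linearized polynomial f(x) = sum_{i<n} a_i x^[i] is represented by its
  coefficient function (nat => 'a), zero outside {..<n}.\<close>

definition lin_polys :: "nat \<Rightarrow> (nat \<Rightarrow> 'a::zero) set" where
  "lin_polys n = {a. \<forall>i\<ge>n. a i = 0}"

definition cscale :: "'a::field \<Rightarrow> (nat \<Rightarrow> 'a) \<Rightarrow> (nat \<Rightarrow> 'a)" where
  "cscale c a = (\<lambda>i. c * a i)"

abbreviation Fspan :: "(nat \<Rightarrow> 'a::field) set \<Rightarrow> (nat \<Rightarrow> 'a) set" where
  "Fspan S \<equiv> module.span cscale S"

abbreviation Fsubspace :: "(nat \<Rightarrow> 'a::field) set \<Rightarrow> bool" where
  "Fsubspace S \<equiv> module.subspace cscale S"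

abbreviation Fdim :: "(nat \<Rightarrow> 'a::field) set \<Rightarrow> nat" where
  "Fdim S \<equiv> vector_space.dim cscale S"

definition lin_eval :: "nat \<Rightarrow> nat \<Rightarrow> (nat \<Rightarrow> 'a::field) \<Rightarrow> 'a \<Rightarrow> 'a" where
  "lin_eval q n a x = (\<Sum>i<n. a i * x ^ (q ^ i))"

definition subfield_q :: "nat \<Rightarrow> 'a::field set" where
  "subfield_q q = {x. x ^ q = x}"

definition rank_le_one :: "nat \<Rightarrow> nat \<Rightarrow> (nat \<Rightarrow> 'a::field) \<Rightarrow> bool" where
  "rank_le_one q n a \<longleftrightarrow> (\<exists>y. \<forall>x. \<exists>c\<in>subfield_q q. lin_eval q n a x = c * y)"

definition U1 :: "nat \<Rightarrow> nat \<Rightarrow> (nat \<Rightarrow> 'a::field) set" where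
  "U1 q n = {a \<in> lin_polys n. rank_le_one q n a}"

text \<open>f^[j] = x^[j] o f, for an integer j (taken mod n):
  coefficient of x^[m] is a_{(m-j) mod n}^[j mod n].\<close>
definition frob :: "nat \<Rightarrow> nat \<Rightarrow> int \<Rightarrow> (nat \<Rightarrow> 'a::field) \<Rightarrow> (nat \<Rightarrow> 'a)" where
  "frob q n j a = (\<lambda>m. if m < n
      then a (nat ((int m - j) mod int n)) ^ (q ^ nat (j mod int n))
      else 0)"

definition frob_set :: "nat \<Rightarrow> nat \<Rightarrow> int \<Rightarrow> (nat \<Rightarrow> 'a::field) set \<Rightarrow> (nat \<Rightarrow> 'a) set" where
  "frob_set q n j W = frob q n j ` W"

end

theory Submission
  imports Defs "HOL-Number_Theory.Residues" "HOL-Computational_Algebra.Polynomial"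
begin

(* Write sigma for f |-> f^[s]. It is additive, semilinear over the field automorphism
   c |-> c^(q^s), and sigma^n = id. Let C_m be the set of f with f, sigma f, ..., sigma^m f in C,
   so that V = sigma C_1 and V cap V^[s] = sigma^2 C_2. Since C_m cap sigma C_m = sigma C_(m+1),
   Grassmann's formula makes d_m = dim C_m convex in m. Moreover d_m decreases strictly until it
   reaches 0: a nonzero sigma-invariant subspace of C would contain a nonzero trace
   sum_(i<n) sigma^i (c u), which is fixed by sigma and therefore has rank one because
   gcd(s, n) = 1. Together with d_0 = k and d_1 = k - 2 this forces d_m = k - 2m up to some turning
   point a and d_m = k - a - m afterwards. Walking down from d_(k-a-1) = 1, at each step where d is
   affine a spanning set S of C_(m+1) gives the spanning set S cup sigma S of C_m; a single new
   vector is needed at m = a - 1, and the two sigma-chains of lengths k - a and a result.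
   Finally a = 1 exactly when dim (V cap V^[s]) = k - 3. *)

section \<open>Finite fields\<close>

lemma power_card_eq_self:
  fixes x :: "'a::{field,finite}"
  shows "x ^ card (UNIV :: 'a set) = x"
proof (cases "x = 0")
  case False
  define G where "G = \<lparr>carrier = UNIV - {0::'a}, monoid.mult = (*), one = 1::'a\<rparr>"
  have "comm_group G"
  proof (rule comm_groupI)
    fix y assume "y \<in> carrier G"
    then show "\<exists>z\<in>carrier G. z \<otimes>\<^bsub>G\<^esub> y = \<one>\<^bsub>G\<^esub>"
      by (intro bexI[of _ "inverse y"]) (auto simp: G_def)
  qed (auto simp: G_def)
  have pow: "x [^]\<^bsub>G\<^esub> m = x ^ m" for m :: nat
    by (induction m) (simp_all add: G_def)
  have "x [^]\<^bsub>G\<^esub> card (carrier G) = \<one>\<^bsub>G\<^esub>"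
    by (rule comm_group.power_order_eq_one[OF \<open>comm_group G\<close>]) (simp_all add: G_def False)
  then have "x ^ card (carrier G) = \<one>\<^bsub>G\<^esub>"
    by (simp only: pow)
  then have "x ^ (card (UNIV :: 'a set) - 1) = 1"
    by (simp add: G_def card_Diff_singleton)
  then show ?thesis
    using finite_UNIV_card_ge_0[where 'a='a] by (cases "card (UNIV :: 'a set)") simp_all
qed (simp add: finite_UNIV_card_ge_0)

lemma CHAR_eq_if_card_eq_prime_power:
  assumes "prime p" and "card (UNIV :: 'a::{idom,finite} set) = p ^ m"
  shows "CHAR('a) = p"
proof -
  have "prime CHAR('a)"
    using prime_CHAR_semidom finite_imp_CHAR_pos[OF finite] by blast
  moreover have "CHAR('a) dvd p ^ m"
    using CHAR_dvd_CARD[where 'a='a] assms(2) by simp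
  ultimately show ?thesis
    using assms(1) prime_dvd_power primes_dvd_imp_eq by blast
qed

lemma exists_nonroot_sum_powers:
  fixes c :: "nat \<Rightarrow> 'a::{field,finite}" and d :: "nat \<Rightarrow> nat"
  assumes "finite I" "i\<^sub>0 \<in> I" "c i\<^sub>0 \<noteq> 0"
    and unique: "\<And>i. i \<in> I \<Longrightarrow> d i = d i\<^sub>0 \<Longrightarrow> i = i\<^sub>0"
    and small: "\<And>i. i \<in> I \<Longrightarrow> d i < card (UNIV :: 'a set)"
  shows "\<exists>x. (\<Sum>i\<in>I. c i * x ^ d i) \<noteq> 0"
proof (rule ccontr)
  define P where "P = (\<Sum>i\<in>I. monom (c i) (d i))"
  assume "\<nexists>x. (\<Sum>i\<in>I. c i * x ^ d i) \<noteq> 0"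
  then have "{x. poly P x = 0} = UNIV"
    by (simp add: P_def poly_sum poly_monom)
  have "coeff P (d i\<^sub>0) = (\<Sum>i\<in>I. if i = i\<^sub>0 then c i else 0)"
    unfolding P_def coeff_sum coeff_monom using unique by (intro sum.cong) auto
  then have "P \<noteq> 0"
    using assms(1-3) by auto
  have "degree P \<le> card (UNIV :: 'a set) - 1"
    unfolding P_def using small by (intro degree_sum_le assms(1) order.trans[OF degree_monom_le]) fastforce
  moreover have "card (UNIV :: 'a set) \<le> degree P"
    using card_poly_roots_bound[OF \<open>P \<noteq> 0\<close>] \<open>{x. poly P x = 0} = UNIV\<close> by simp
  ultimately show False
    using finite_UNIV_card_ge_0[where 'a='a] by simp
qed

section \<open>Dimension inside the span of a finite set\<close>

context vector_space
begin

lemma span_Int_span_eq_zero: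
  assumes "independent (S \<union> T)" and "S \<inter> T = {}"
  shows "span S \<inter> span T = {0}"
proof -
  have "v = 0" if "v \<in> span S" "v \<in> span T" for v
  proof -
    have "representation (S \<union> T) v = representation S v"
      "representation (S \<union> T) v = representation T v"
      using assms(1) that by (auto intro: representation_extend)
    then have "representation (S \<union> T) v b = 0" for b
      using representation_ne_zero[of S v b] representation_ne_zero[of T v b] assms(2)
      by (metis disjoint_iff)
    then show "v = 0"
      using sum_nonzero_representation_eq[OF assms(1), of v] that(1) span_mono[of S "S \<union> T"]
      by auto
  qed
  then show ?thesis
    using span_zero[of S] span_zero[of T] by blast
qed

lemma independent_Un:
  assumes S: "independent S" and T: "independent T" and ST: "span S \<inter> span T = {0}"
  shows "independent (S \<union> T)"
proof -
  have in_span: "a \<in> span (Y - {a})"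
    if a_Y: "a \<in> Y" and a_span: "a \<in> span ((X \<union> Y) - {a})"
      and XY: "span X \<inter> span Y = {0}" for X Y a
  proof (cases "a \<in> X")
    case True
    then have "a = 0"
      using a_Y XY span_base[of a X] span_base[of a Y] by blast
    then show ?thesis
      using span_zero by simp
  next
    case False
    then have "(X \<union> Y) - {a} = X \<union> (Y - {a})"
      by blast
    then obtain x y where xy: "a = x + y" "x \<in> span X" "y \<in> span (Y - {a})"
      using a_span span_Un[of X "Y - {a}"] by auto
    have "y \<in> span Y"
      using xy(3) span_mono[of "Y - {a}" Y] by blast
    then have "x \<in> span Y"
      using xy(1) span_diff[OF span_base[OF a_Y]] by force
    then have "x = 0"
      using xy(2) XY by blast
    then show ?thesis
      using xy by simp
  qed
  show ?thesis
  proof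
    assume "dependent (S \<union> T)"
    then obtain a where a: "a \<in> S \<union> T" "a \<in> span ((S \<union> T) - {a})"
      unfolding dependent_def by blast
    show False
    proof (cases "a \<in> T")
      case True
      then show False
        using in_span[OF True a(2) ST] T dependent_def by blast
    next
      case False
      then have "a \<in> S" "a \<in> span ((T \<union> S) - {a})"
        using a by (auto simp: Un_commute)
      then show False
        using in_span[of a S T] ST S dependent_def by blast
    qed
  qed
qed

lemma independent_if_card_le_dim:
  assumes "finite S" and "card S \<le> dim S"
  shows "independent S"
proof
  assume "dependent S"
  then obtain a where a: "a \<in> S" "a \<in> span (S - {a})"
    unfolding dependent_def by blast
  then have "S \<subseteq> span (S - {a})"
    using span_superset[of "S - {a}"] by blast
  then have "dim S \<le> card (S - {a})"
    using assms(1) by (simp add: dim_le_card)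
  moreover have "card (S - {a}) < card S"
    by (rule card_Diff1_less[OF assms(1) a(1)])
  ultimately show False
    using assms(2) by linarith
qed

lemma span_Int_span_eq_zero_if_card_le_dim:
  assumes "finite S" and "finite T" and "card S + card T \<le> dim (S \<union> T)"
  shows "span S \<inter> span T = {0}"
proof -
  have "dim (S \<union> T) \<le> card (S \<union> T)"
    using assms(1,2) by (intro dim_le_card span_superset) auto
  moreover have "card S + card T = card (S \<union> T) + card (S \<inter> T)"
    using assms(1,2) by (rule card_Un_Int)
  ultimately have "card (S \<union> T) \<le> dim (S \<union> T)" "card (S \<inter> T) = 0"
    using assms(3) by linarith+
  then have "S \<inter> T = {}"
    using assms(1) by simp
  with \<open>card (S \<union> T) \<le> dim (S \<union> T)\<close> show ?thesis
    using assms(1,2) by (intro span_Int_span_eq_zero independent_if_card_le_dim) auto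
qed

lemma dim_singleton_zero: "dim {0} = 0"
  using dim_span[of "{}"] dim_eq_card_independent[OF independent_empty] by simp

context
  fixes B :: "'b set"
  assumes finite_B: "finite B"
begin

lemma obtain_basis_in_finite_span:
  assumes "A \<subseteq> span B"
  obtains K where "K \<subseteq> A" "independent K" "finite K" "A \<subseteq> span K" "card K = dim A"
proof -
  obtain K where K: "K \<subseteq> A" "independent K" "A \<subseteq> span K" "card K = dim A"
    by (rule basis_exists[of A])
  have "K \<subseteq> span B"
    using K(1) assms by (rule order_trans)
  then have "finite K"
    using independent_span_bound[OF finite_B K(2)] by simp
  with K show ?thesis
    by (intro that)
qed

lemma card_le_dim_if_independent_subset:
  assumes "A \<subseteq> span B" and "independent I" and "I \<subseteq> A"
  shows "card I \<le> dim A"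
proof -
  obtain J where J: "I \<subseteq> J" "J \<subseteq> A" "independent J" "A \<subseteq> span J"
    using maximal_independent_subset_extend[OF assms(3,2)] by blast
  have "J \<subseteq> span B"
    using J(2) assms(1) by (rule order_trans)
  then have "finite J"
    using independent_span_bound[OF finite_B J(3)] by simp
  then have "card I \<le> card J"
    using J(1) by (rule card_mono)
  also have "card J = dim A"
    using J(2,4,3) by (rule basis_card_eq_dim)
  finally show ?thesis .
qed

lemma dim_subset_in_finite_span:
  assumes "A \<subseteq> A'" and "A' \<subseteq> span B"
  shows "dim A \<le> dim A'"
proof -
  obtain K where K: "K \<subseteq> A" "independent K" "card K = dim A"
    by (rule basis_exists[of A])
  have "card K \<le> dim A'"
    using assms(2) K(2) order_trans[OF K(1) assms(1)] by (rule card_le_dim_if_independent_subset)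
  then show ?thesis
    using K(3) by simp
qed

lemma subspace_eq_if_dim_le:
  assumes "A \<subseteq> A'" and "subspace A" and "A' \<subseteq> span B" and "dim A' \<le> dim A"
  shows "A = A'"
proof (rule ccontr)
  assume "A \<noteq> A'"
  then obtain x where x: "x \<in> A'" "x \<notin> A"
    using assms(1) by blast
  have "A \<subseteq> span B"
    using assms(1,3) by (rule order_trans)
  then obtain K where K: "K \<subseteq> A" "independent K" "finite K" "A \<subseteq> span K" "card K = dim A"
    by (rule obtain_basis_in_finite_span)
  have "x \<notin> span K"
    using x(2) span_minimal[OF K(1) assms(2)] by blast
  then have "card (insert x K) \<le> dim A'"
    using K(1,2) x(1) assms(1,3)
    by (intro card_le_dim_if_independent_subset independent_insertI) auto
  moreover have "x \<notin> K"
    using K(1) x(2) by blast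
  ultimately show False
    using K(3,5) assms(4) by simp
qed

lemma dim_insert_ge:
  assumes "insert g S \<subseteq> span B" and "g \<notin> span S"
  shows "dim S + 1 \<le> dim (insert g S)"
proof -
  have "S \<subseteq> span B"
    using assms(1) by blast
  then obtain K where K: "K \<subseteq> S" "independent K" "finite K" "S \<subseteq> span K" "card K = dim S"
    by (rule obtain_basis_in_finite_span)
  have "g \<notin> span K"
    using assms(2) span_mono[OF K(1)] by blast
  then have "card (insert g K) \<le> dim (insert g S)"
    using K(1,2) assms(1) by (intro card_le_dim_if_independent_subset independent_insertI) auto
  moreover have "g \<notin> K"
    using \<open>g \<notin> span K\<close> span_base[of g K] by blast
  ultimately show ?thesis
    using K(3,5) by simp
qed

lemma exists_span_insert_eq:
  assumes "subspace W" and "W \<subseteq> span B" and "S \<subseteq> W" and "dim W \<le> dim S + 1"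
  shows "\<exists>g\<in>W. W = span (insert g S)"
proof (cases "W \<subseteq> span S")
  case True
  then have "W = span (insert 0 S)"
    using span_minimal[OF assms(3,1)] by simp
  then show ?thesis
    using subspace_0[OF assms(1)] by blast
next
  case False
  then obtain g where g: "g \<in> W" "g \<notin> span S"
    by blast
  have "span (insert g S) \<subseteq> W"
    using g(1) assms(1,3) by (intro span_minimal) auto
  moreover have "insert g S \<subseteq> span B"
    using g(1) assms(2,3) by blast
  then have "dim W \<le> dim (span (insert g S))"
    using dim_insert_ge[OF _ g(2)] assms(4) by (simp add: dim_span)
  ultimately have "span (insert g S) = W"
    using assms(2) by (intro subspace_eq_if_dim_le subspace_span)
  then show ?thesis
    using g(1) by blast
qed

lemma dim_add_dim_le_dim_span_Un_add_dim_Int: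
  assumes X: "subspace X" "X \<subseteq> span B" and Y: "subspace Y" "Y \<subseteq> span B"
  shows "dim X + dim Y \<le> dim (span (X \<union> Y)) + dim (X \<inter> Y)"
proof -
  have "X \<inter> Y \<subseteq> span B"
    using X(2) by blast
  then obtain K where K: "K \<subseteq> X \<inter> Y" "independent K" "finite K" "X \<inter> Y \<subseteq> span K"
      "card K = dim (X \<inter> Y)"
    by (rule obtain_basis_in_finite_span)
  obtain KX where KX: "K \<subseteq> KX" "KX \<subseteq> X" "independent KX" "X \<subseteq> span KX"
    using maximal_independent_subset_extend[of K X] K(1,2) by blast
  have "finite KX"
    using independent_span_bound[OF finite_B KX(3)] KX(2) X(2) by blast
  have "card KX = dim X"
    using KX(2,4,3) by (rule basis_card_eq_dim)
  obtain KY where KY: "KY \<subseteq> Y" "independent KY" "finite KY" "Y \<subseteq> span KY" "card KY = dim Y"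
    using Y(2) by (rule obtain_basis_in_finite_span)
  define J where "J = KX - K"
  have "span K \<inter> span J = {0}"
    using KX(1,3) by (intro span_Int_span_eq_zero) (auto simp: J_def Un_absorb1)
  moreover have "span J \<subseteq> X" "span KY \<subseteq> Y"
    using span_minimal[of J X] span_minimal[OF KY(1) Y(1)] KX(2) X(1) by (auto simp: J_def)
  ultimately have JKY: "span J \<inter> span KY = {0}"
    using K(4) span_zero[of J] span_zero[of KY] by blast
  then have "independent (J \<union> KY)"
    using independent_mono[OF KX(3), of J] KY(2) by (intro independent_Un) (auto simp: J_def)
  moreover have "J \<union> KY \<subseteq> span (X \<union> Y)"
    using KX(2) KY(1) span_superset[of "X \<union> Y"] by (auto simp: J_def)
  moreover have "span (X \<union> Y) \<subseteq> span B"
    using span_mono[of "X \<union> Y" "span B"] X(2) Y(2) by (simp add: span_span)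
  ultimately have "card (J \<union> KY) \<le> dim (span (X \<union> Y))"
    by (intro card_le_dim_if_independent_subset)
  moreover have "J \<inter> KY = {}"
  proof -
    have "x = 0" if "x \<in> J" "x \<in> KY" for x
      using JKY span_base[OF that(1)] span_base[OF that(2)] by blast
    moreover have "0 \<notin> KY"
      using dependent_zero KY(2) by blast
    ultimately show ?thesis
      by blast
  qed
  then have "card (J \<union> KY) = card J + card KY"
    using \<open>finite KX\<close> KY(3) by (intro card_Un_disjoint) (auto simp: J_def)
  moreover have "card J = dim X - dim (X \<inter> Y)" "dim (X \<inter> Y) \<le> dim X"
    using card_Diff_subset[OF finite_subset[OF KX(1)] KX(1)] card_mono[OF _ KX(1)]
      \<open>finite KX\<close> \<open>card KX = dim X\<close> K(5)
    by (simp_all add: J_def)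
  ultimately show ?thesis
    using KY(5) by linarith
qed

end

end

section \<open>A convex sequence of natural numbers\<close>

lemma convex_sequence_profile:
  fixes d :: "nat \<Rightarrow> nat"
  assumes d0: "d 0 = k" and d1: "d 1 + 2 = k" and "2 < k"
    and antimono: "\<And>m. d (Suc m) \<le> d m"
    and convex: "\<And>m. 2 * d (Suc m) \<le> d m + d (Suc (Suc m))"
    and strict: "\<And>m. d (Suc m) = d m \<Longrightarrow> d m = 0"
  obtains a where "1 \<le> a" and "2 * a \<le> k"
    and "\<And>m. m \<le> a \<Longrightarrow> d m + 2 * m = k"
    and "\<And>m. a \<le> m \<Longrightarrow> m \<le> k - a \<Longrightarrow> d m + a + m = k"
proof -
  define \<delta> where "\<delta> m = d m - d (Suc m)" for m
  have \<delta>_antimono: "\<delta> (m + i) \<le> \<delta> m" for m i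
  proof (induction i)
    case (Suc i)
    have "\<delta> (Suc (m + i)) \<le> \<delta> (m + i)"
      using convex[of "m + i"] antimono[of "m + i"] antimono[of "Suc (m + i)"]
      unfolding \<delta>_def by linarith
    with Suc show ?case
      by simp
  qed simp
  have \<delta>0: "\<delta> 0 = 2"
    using d0 d1 by (simp add: \<delta>_def)
  have "\<exists>m. \<delta> m \<noteq> 2"
  proof (rule ccontr)
    assume "\<nexists>m. \<delta> m \<noteq> 2"
    then have \<delta>2: "\<delta> m = 2" for m
      by blast
    have "d m + 2 * m = k" for m
    proof (induction m)
      case (Suc m)
      then show ?case
        using \<delta>2[of m] antimono[of m] unfolding \<delta>_def by arith
    qed (simp add: d0)
    from this[of k] show False
      using \<open>2 < k\<close> by simp
  qed
  define a where "a = (LEAST m. \<delta> m \<noteq> 2)"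
  have "\<delta> a \<noteq> 2"
    unfolding a_def using \<open>\<exists>m. \<delta> m \<noteq> 2\<close> by (rule LeastI_ex)
  then have "1 \<le> a"
    using \<delta>0 by (cases a) auto
  have quadratic: "d m + 2 * m = k" if "m \<le> a" for m
    using that
  proof (induction m)
    case (Suc m)
    then have "\<delta> m = 2"
      using not_less_Least[of m "\<lambda>m. \<delta> m \<noteq> 2"] unfolding a_def by simp
    with Suc show ?case
      using antimono[of m] by (simp add: \<delta>_def)
  qed (simp add: d0)
  have "\<delta> (a + i) \<le> 1" for i
    using \<delta>_antimono[of a i] \<delta>_antimono[of 0 a] \<delta>0 \<open>\<delta> a \<noteq> 2\<close> by simp
  have linear: "d (a + i) + a + (a + i) = k" if "a + i \<le> k - a" for i
    using that
  proof (induction i)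
    case (Suc i)
    then have IH: "d (a + i) + a + (a + i) = k"
      by simp
    then have "d (a + i) \<noteq> 0"
      using Suc.prems by linarith
    then have "d (Suc (a + i)) \<noteq> d (a + i)"
      using strict[of "a + i"] by auto
    then have "d (Suc (a + i)) + 1 = d (a + i)"
      using antimono[of "a + i"] \<open>\<delta> (a + i) \<le> 1\<close> unfolding \<delta>_def by linarith
    with IH show ?case
      by simp
  qed (use quadratic[of a] in simp)
  show ?thesis
  proof (rule that[OF \<open>1 \<le> a\<close> _ quadratic])
    show "2 * a \<le> k"
      using quadratic[of a] by simp
    show "d m + a + m = k" if "a \<le> m" "m \<le> k - a" for m
      using linear[of "m - a"] that by simp
  qed
qed

section \<open>Semilinear maps of finite order\<close>

locale semilinear_periodic = vector_space scale
  for scale :: "'a::field \<Rightarrow> 'b::ab_group_add \<Rightarrow> 'b" (infixr \<open>*s\<close> 75) +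
  fixes \<sigma> :: "'b \<Rightarrow> 'b" and \<tau> :: "'a \<Rightarrow> 'a" and L B :: "'b set" and N :: nat
  assumes additive: "\<sigma> (x + y) = \<sigma> x + \<sigma> y"
    and semilinear: "\<sigma> (c *s x) = \<tau> c *s \<sigma> x"
    and surj_\<tau>: "surj \<tau>"
    and finite_B: "finite B" and L_eq_span: "L = span B"
    and maps_L: "x \<in> L \<Longrightarrow> \<sigma> x \<in> L"
    and period_pos: "0 < N" and periodic: "x \<in> L \<Longrightarrow> (\<sigma> ^^ N) x = x"
begin

lemma zero [simp]: "\<sigma> 0 = 0"
  using additive[of 0 0] by simp

lemma sum: "\<sigma> (sum f A) = (\<Sum>a\<in>A. \<sigma> (f a))"
  by (induction A rule: infinite_finite_induct) (simp_all add: additive)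

lemma subspace_L: "subspace L"
  by (simp add: L_eq_span subspace_span)

lemma funpow_additive: "(\<sigma> ^^ t) (x + y) = (\<sigma> ^^ t) x + (\<sigma> ^^ t) y"
  by (induction t) (simp_all add: additive)

lemma funpow_semilinear: "(\<sigma> ^^ t) (c *s x) = (\<tau> ^^ t) c *s (\<sigma> ^^ t) x"
  by (induction t) (simp_all add: semilinear)

lemma funpow_zero [simp]: "(\<sigma> ^^ t) 0 = 0"
  by (induction t) simp_all

lemma funpow_maps_L: "x \<in> L \<Longrightarrow> (\<sigma> ^^ t) x \<in> L"
  by (induction t) (simp_all add: maps_L)

lemma funpow: "semilinear_periodic scale (\<sigma> ^^ t) (\<tau> ^^ t) L B N"
proof
  show "surj (\<tau> ^^ t)"
    using surj_\<tau> by simp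
  show "((\<sigma> ^^ t) ^^ N) x = x" if "x \<in> L" for x
  proof -
    have "((\<sigma> ^^ N) ^^ t) x = x"
      using that by (induction t) (simp_all add: periodic)
    then show ?thesis
      by (simp add: funpow_mult mult.commute)
  qed
qed (simp_all add: funpow_additive funpow_semilinear funpow_maps_L finite_B period_pos,
     rule L_eq_span)

lemma image_span_subset: "\<sigma> ` span S \<subseteq> span (\<sigma> ` S)"
proof -
  have "subspace {x. \<sigma> x \<in> span (\<sigma> ` S)}"
    unfolding subspace_def by (simp add: additive semilinear span_zero span_add span_scale)
  moreover have "S \<subseteq> {x. \<sigma> x \<in> span (\<sigma> ` S)}"
    using span_base[of _ "\<sigma> ` S"] by blast
  ultimately show ?thesis
    using span_minimal[of S "{x. \<sigma> x \<in> span (\<sigma> ` S)}"] by blast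
qed

lemma subspace_image:
  assumes "subspace U"
  shows "subspace (\<sigma> ` U)"
  unfolding subspace_def
proof (intro conjI ballI allI)
  show "0 \<in> \<sigma> ` U"
    using subspace_0[OF assms] by (intro image_eqI[of 0 \<sigma> 0]) simp_all
next
  fix x y
  assume "x \<in> \<sigma> ` U" "y \<in> \<sigma> ` U"
  then obtain x' y' where "x' \<in> U" "y' \<in> U" "x = \<sigma> x'" "y = \<sigma> y'"
    by blast
  then show "x + y \<in> \<sigma> ` U"
    using subspace_add[OF assms] by (intro image_eqI[of _ \<sigma> "x' + y'"]) (simp_all add: additive)
next
  fix c x
  assume "x \<in> \<sigma> ` U"
  then obtain x' where "x' \<in> U" "x = \<sigma> x'"
    by blast
  moreover obtain c' where "c = \<tau> c'"
    using surjD[OF surj_\<tau>] by blast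
  ultimately show "c *s x \<in> \<sigma> ` U"
    using subspace_scale[OF assms] by (intro image_eqI[of _ \<sigma> "c' *s x'"]) (simp_all add: semilinear)
qed

lemma dim_image_le:
  assumes "U \<subseteq> L"
  shows "dim (\<sigma> ` U) \<le> dim U"
proof -
  obtain K where K: "K \<subseteq> U" "independent K" "finite K" "U \<subseteq> span K" "card K = dim U"
    using obtain_basis_in_finite_span[OF finite_B] assms L_eq_span by blast
  have "\<sigma> ` U \<subseteq> span (\<sigma> ` K)"
    using image_span_subset[of K] K(4) by blast
  then have "dim (\<sigma> ` U) \<le> card (\<sigma> ` K)"
    using K(3) by (simp add: dim_le_card)
  also have "\<dots> \<le> card K"
    using K(3) by (rule card_image_le)
  finally show ?thesis
    using K(5) by simp
qed

lemma left_inverse: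
  assumes "x \<in> L"
  shows "(\<sigma> ^^ (N - 1)) (\<sigma> x) = x"
proof -
  have "(\<sigma> ^^ (N - 1)) (\<sigma> x) = (\<sigma> ^^ Suc (N - 1)) x"
    by (simp only: funpow_Suc_right comp_apply)
  also have "Suc (N - 1) = N"
    using period_pos by simp
  finally show ?thesis
    using periodic[OF assms] by simp
qed

lemma inj_on_L: "inj_on \<sigma> L"
  using left_inverse by (rule inj_on_inverseI)

lemma dim_image:
  assumes "U \<subseteq> L"
  shows "dim (\<sigma> ` U) = dim U"
proof (rule antisym)
  show "dim (\<sigma> ` U) \<le> dim U"
    using assms by (rule dim_image_le)
  have "(\<sigma> ^^ (N - 1)) ` \<sigma> ` U = U"
    using left_inverse assms by (force simp: image_image)
  moreover have "\<sigma> ` U \<subseteq> L"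
    using maps_L assms by blast
  ultimately show "dim U \<le> dim (\<sigma> ` U)"
    using semilinear_periodic.dim_image_le[OF funpow, of "\<sigma> ` U" "N - 1"] by simp
qed

lemma sum_funpow_fixed:
  assumes "y \<in> L"
  shows "\<sigma> (\<Sum>i<N. (\<sigma> ^^ i) y) = (\<Sum>i<N. (\<sigma> ^^ i) y)"
proof -
  have "(\<Sum>i<Suc N. (\<sigma> ^^ i) y) = y + (\<Sum>i<N. (\<sigma> ^^ Suc i) y)"
    by (simp only: sum.lessThan_Suc_shift funpow_0)
  moreover have "(\<Sum>i<Suc N. (\<sigma> ^^ i) y) = (\<Sum>i<N. (\<sigma> ^^ i) y) + y"
    using periodic[OF assms] by simp
  ultimately have "(\<Sum>i<N. (\<sigma> ^^ Suc i) y) = (\<Sum>i<N. (\<sigma> ^^ i) y)"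
    by (simp add: add.commute)
  then show ?thesis
    by (simp add: sum)
qed

lemma UN_funpow_image_Suc:
  "(\<Union>t\<le>Suc i. (\<sigma> ^^ t) ` S) = (\<Union>t\<le>i. (\<sigma> ^^ t) ` S) \<union> \<sigma> ` (\<Union>t\<le>i. (\<sigma> ^^ t) ` S)"
proof (intro equalityI subsetI)
  fix x
  assume "x \<in> (\<Union>t\<le>Suc i. (\<sigma> ^^ t) ` S)"
  then obtain t y where ty: "t \<le> Suc i" "y \<in> S" "x = (\<sigma> ^^ t) y"
    by blast
  show "x \<in> (\<Union>t\<le>i. (\<sigma> ^^ t) ` S) \<union> \<sigma> ` (\<Union>t\<le>i. (\<sigma> ^^ t) ` S)"
  proof (cases t)
    case 0
    then have "x \<in> (\<sigma> ^^ 0) ` S" "0 \<in> {..i}"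
      using ty by simp_all
    then show ?thesis
      by blast
  next
    case (Suc t')
    then have "x = \<sigma> ((\<sigma> ^^ t') y)" "t' \<le> i"
      using ty by simp_all
    then show ?thesis
      using ty(2) by blast
  qed
next
  fix x
  assume "x \<in> (\<Union>t\<le>i. (\<sigma> ^^ t) ` S) \<union> \<sigma> ` (\<Union>t\<le>i. (\<sigma> ^^ t) ` S)"
  then obtain t y where "t \<le> i" "y \<in> S" "x = (\<sigma> ^^ t) y \<or> x = (\<sigma> ^^ Suc t) y"
    by auto
  then show "x \<in> (\<Union>t\<le>Suc i. (\<sigma> ^^ t) ` S)"
    by (metis UN_I atMost_iff image_eqI le_SucI Suc_le_mono)
qed

definition iterates :: "'b \<Rightarrow> nat \<Rightarrow> 'b set" where
  "iterates h l = (\<lambda>t. (\<sigma> ^^ t) h) ` {..<l}"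

lemma iterates_Suc: "iterates h (Suc l) = insert h (\<sigma> ` iterates h l)"
  by (simp add: iterates_def lessThan_Suc_eq_insert_0 image_image)

lemma iterates_1: "iterates h 1 = {h}"
  using iterates_Suc[of h 0] by (simp add: iterates_def)

lemma start_in_iterates: "0 < l \<Longrightarrow> h \<in> iterates h l"
  unfolding iterates_def by (intro image_eqI[of h _ 0]) simp_all

lemma finite_iterates: "finite (iterates h l)"
  by (simp add: iterates_def)

lemma card_iterates_le: "card (iterates h l) \<le> l"
  unfolding iterates_def using card_image_le[of "{..<l}" "\<lambda>t. (\<sigma> ^^ t) h"] by simp

lemma Un_image_iterates:
  assumes "0 < l"
  shows "iterates h l \<union> \<sigma> ` iterates h l = iterates h (Suc l)"
proof -
  have "iterates h l \<subseteq> iterates h (Suc l)"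
    by (auto simp: iterates_def)
  then show ?thesis
    using iterates_Suc[of h l] start_in_iterates[OF assms, of h] by auto
qed

lemma UN_funpow_image_iterates:
  assumes "0 < l"
  shows "(\<Union>t\<le>i. (\<sigma> ^^ t) ` iterates h l) = iterates h (l + i)"
proof (induction i)
  case (Suc i)
  then show ?case
    using Un_image_iterates[of "l + i" h] assms by (simp add: UN_funpow_image_Suc)
qed simp

end

section \<open>Subspaces without invariant subspaces\<close>

locale twisted_subspace = semilinear_periodic +
  fixes C :: "'b set"
  assumes subspace_C: "subspace C" and C_subset_L: "C \<subseteq> L"
    and no_invariant: "\<And>U. subspace U \<Longrightarrow> U \<subseteq> C \<Longrightarrow> \<sigma> ` U \<subseteq> U \<Longrightarrow> U = {0}"
begin

text \<open>\<open>\<sigma>\<^sup>m\<close> maps \<open>core m\<close> onto \<open>C \<inter> \<sigma> C \<inter> \<dots> \<inter> \<sigma>\<^sup>m C\<close>.\<close>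

definition core :: "nat \<Rightarrow> 'b set" where
  "core m = {x \<in> L. \<forall>t\<le>m. (\<sigma> ^^ t) x \<in> C}"

abbreviation core_dim :: "nat \<Rightarrow> nat" where
  "core_dim m \<equiv> dim (core m)"

lemma subspace_core: "subspace (core m)"
  using subspace_L subspace_C
  unfolding subspace_def core_def by (simp add: funpow_additive funpow_semilinear)

lemma core_subset_L: "core m \<subseteq> L"
  by (auto simp: core_def)

lemma core_subset_span: "core m \<subseteq> span B"
  using core_subset_L L_eq_span by simp

lemma core_subset_C: "core m \<subseteq> C"
  by (auto simp: core_def)

lemma core_0: "core 0 = C"
  using C_subset_L by (auto simp: core_def)

lemma core_Suc_subset: "core (Suc m) \<subseteq> core m"
  by (auto simp: core_def)

lemma core_Int_image: "core m \<inter> \<sigma> ` core m = \<sigma> ` core (Suc m)"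
proof (intro equalityI subsetI)
  fix x
  assume "x \<in> core m \<inter> \<sigma> ` core m"
  then obtain y where x: "x \<in> core m" and y: "y \<in> core m" "x = \<sigma> y"
    by blast
  have "(\<sigma> ^^ t) y \<in> C" if "t \<le> Suc m" for t
  proof (cases t)
    case (Suc t')
    then have "(\<sigma> ^^ t) y = (\<sigma> ^^ t') x"
      using y(2) by (simp add: funpow_swap1)
    then show ?thesis
      using x Suc that by (simp add: core_def)
  qed (use y(1) in \<open>auto simp: core_def\<close>)
  then have "y \<in> core (Suc m)"
    using y(1) by (simp add: core_def)
  then show "x \<in> \<sigma> ` core (Suc m)"
    using y(2) by blast
next
  fix x
  assume "x \<in> \<sigma> ` core (Suc m)"
  then obtain y where y: "y \<in> core (Suc m)" "x = \<sigma> y"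
    by blast
  have "(\<sigma> ^^ t) x \<in> C" if "t \<le> m" for t
  proof -
    have "Suc t \<le> Suc m"
      using that by simp
    then have "(\<sigma> ^^ Suc t) y \<in> C"
      using y(1) unfolding core_def by blast
    then show ?thesis
      using y(2) by (simp add: funpow_swap1)
  qed
  then have "x \<in> core m"
    using y maps_L by (simp add: core_def)
  moreover have "x \<in> \<sigma> ` core m"
    using y core_Suc_subset by blast
  ultimately show "x \<in> core m \<inter> \<sigma> ` core m"
    by blast
qed

lemma image_core_Suc_subset: "\<sigma> ` core (Suc m) \<subseteq> core m"
  using core_Int_image by blast

lemma core_dim_Suc_le: "core_dim (Suc m) \<le> core_dim m"
  using finite_B core_Suc_subset core_subset_span by (rule dim_subset_in_finite_span)

lemma core_span_step:
  assumes "core (Suc m) = span S"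
  shows "span (S \<union> \<sigma> ` S) \<subseteq> core m"
    and "2 * core_dim (Suc m) \<le> dim (S \<union> \<sigma> ` S) + core_dim (Suc (Suc m))"
proof -
  let ?X = "core (Suc m)"
  have "S \<subseteq> ?X"
    using assms span_superset[of S] by simp
  then show sub: "span (S \<union> \<sigma> ` S) \<subseteq> core m"
    using core_Suc_subset image_core_Suc_subset by (intro span_minimal subspace_core) blast
  have image_X: "\<sigma> ` ?X \<subseteq> span B"
    using core_subset_L maps_L L_eq_span by blast
  have grassmann:
    "core_dim (Suc m) + dim (\<sigma> ` ?X) \<le> dim (span (?X \<union> \<sigma> ` ?X)) + dim (?X \<inter> \<sigma> ` ?X)"
    using finite_B subspace_core core_subset_span subspace_image[OF subspace_core] image_X
    by (rule dim_add_dim_le_dim_span_Un_add_dim_Int)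
  have "dim (\<sigma> ` ?X) = core_dim (Suc m)"
    using core_subset_L by (rule dim_image)
  moreover have "dim (?X \<inter> \<sigma> ` ?X) = core_dim (Suc (Suc m))"
    using core_Int_image[of "Suc m"] core_subset_L[of "Suc (Suc m)"] by (simp add: dim_image)
  moreover have "span (?X \<union> \<sigma> ` ?X) \<subseteq> span (S \<union> \<sigma> ` S)"
  proof (rule span_minimal[OF _ subspace_span])
    have "?X \<subseteq> span (S \<union> \<sigma> ` S)"
      using assms span_mono[of S "S \<union> \<sigma> ` S"] by simp
    moreover have "\<sigma> ` ?X \<subseteq> span (S \<union> \<sigma> ` S)"
      using assms image_span_subset[of S] span_mono[of "\<sigma> ` S" "S \<union> \<sigma> ` S"] by auto
    ultimately show "?X \<union> \<sigma> ` ?X \<subseteq> span (S \<union> \<sigma> ` S)"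
      by blast
  qed
  then have "dim (span (?X \<union> \<sigma> ` ?X)) \<le> dim (span (S \<union> \<sigma> ` S))"
    using finite_B order_trans[OF sub core_subset_span] by (intro dim_subset_in_finite_span)
  ultimately show "2 * core_dim (Suc m) \<le> dim (S \<union> \<sigma> ` S) + core_dim (Suc (Suc m))"
    using grassmann by (simp add: dim_span)
qed

lemma core_dim_convex: "2 * core_dim (Suc m) \<le> core_dim m + core_dim (Suc (Suc m))"
proof -
  let ?S = "core (Suc m)"
  have "span ?S = ?S"
    using subspace_core by simp
  note step = core_span_step[OF this[symmetric]]
  have "dim (span (?S \<union> \<sigma> ` ?S)) \<le> core_dim m"
    using finite_B step(1) core_subset_span by (rule dim_subset_in_finite_span)
  with step(2) show ?thesis
    by (simp add: dim_span)
qed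

lemma core_dim_Suc_eq_imp_zero:
  assumes "core_dim (Suc m) = core_dim m"
  shows "core_dim m = 0"
proof -
  have "core (Suc m) = core m"
    using finite_B core_Suc_subset subspace_core core_subset_span assms
    by (intro subspace_eq_if_dim_le) simp_all
  then have "\<sigma> ` core m \<subseteq> core m"
    using image_core_Suc_subset[of m] by simp
  then have "core m = {0}"
    using subspace_core core_subset_C by (intro no_invariant)
  then show ?thesis
    by (simp add: dim_singleton_zero)
qed

lemma core_step_eq:
  assumes "core (Suc m) = span S"
    and "core_dim m + core_dim (Suc (Suc m)) \<le> 2 * core_dim (Suc m)"
  shows "core m = span (S \<union> \<sigma> ` S)"
proof -
  note step = core_span_step[OF assms(1)]
  have "span (S \<union> \<sigma> ` S) = core m"
    using finite_B step(1) subspace_span core_subset_span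
  proof (rule subspace_eq_if_dim_le)
    show "core_dim m \<le> dim (span (S \<union> \<sigma> ` S))"
      using step(2) assms(2) by (simp add: dim_span)
  qed
  then show ?thesis
    by simp
qed

lemma core_step_insert:
  assumes "core (Suc m) = span S"
    and "core_dim m + core_dim (Suc (Suc m)) \<le> 2 * core_dim (Suc m) + 1"
  obtains g where "g \<in> core m" "core m = span (insert g (S \<union> \<sigma> ` S))"
proof -
  note step = core_span_step[OF assms(1)]
  have "\<exists>g\<in>core m. core m = span (insert g (S \<union> \<sigma> ` S))"
    using finite_B subspace_core core_subset_span
  proof (rule exists_span_insert_eq)
    show "S \<union> \<sigma> ` S \<subseteq> core m"
      using step(1) span_superset[of "S \<union> \<sigma> ` S"] by blast
    show "core_dim m \<le> dim (S \<union> \<sigma> ` S) + 1"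
      using step(2) assms(2) by linarith
  qed
  then show ?thesis
    using that by blast
qed

lemma core_descend:
  assumes "core (m + i) = span S"
    and "\<And>j. j < i \<Longrightarrow>
      core_dim (m + j) + core_dim (Suc (Suc (m + j))) \<le> 2 * core_dim (Suc (m + j))"
  shows "core m = span (\<Union>t\<le>i. (\<sigma> ^^ t) ` S)"
  using assms
proof (induction i arbitrary: m)
  case 0
  then show ?case
    by simp
next
  case (Suc i)
  have "core (Suc m) = span (\<Union>t\<le>i. (\<sigma> ^^ t) ` S)"
  proof (rule Suc.IH)
    show "core (Suc m + i) = span S"
      using Suc.prems(1) by simp
    show "core_dim (Suc m + j) + core_dim (Suc (Suc (Suc m + j))) \<le> 2 * core_dim (Suc (Suc m + j))"
      if "j < i" for j
      using Suc.prems(2)[of "Suc j"] that by simp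
  qed
  then have "core m = span ((\<Union>t\<le>i. (\<sigma> ^^ t) ` S) \<union> \<sigma> ` (\<Union>t\<le>i. (\<sigma> ^^ t) ` S))"
    using Suc.prems(2)[of 0] by (intro core_step_eq) simp_all
  then show ?case
    by (simp only: UN_funpow_image_Suc)
qed

lemma core_before_turn_eq_span_iterates:
  assumes "1 \<le> a" and "2 * a \<le> k"
    and quadratic: "\<And>m. m \<le> a \<Longrightarrow> core_dim m + 2 * m = k"
    and linear: "\<And>m. a \<le> m \<Longrightarrow> m \<le> k - a \<Longrightarrow> core_dim m + a + m = k"
  obtains h g where "core (a - 1) = span (iterates h (k - 2 * a + 1) \<union> iterates g 1)"
proof (cases "2 * a = k")
  case True
  obtain K where K: "K \<subseteq> core (a - 1)" "independent K" "finite K" "core (a - 1) \<subseteq> span K"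
      "card K = core_dim (a - 1)"
    using finite_B core_subset_span by (rule obtain_basis_in_finite_span)
  have "card K = 2"
    using quadratic[of "a - 1"] assms(1) True K(5) by simp
  then obtain h g where "K = {h, g}"
    by (auto simp: card_2_iff)
  moreover have "core (a - 1) = span K"
    using span_minimal[OF K(1) subspace_core] K(4) by blast
  ultimately have "core (a - 1) = span (iterates h 1 \<union> iterates g 1)"
    unfolding iterates_1 by (simp add: insert_commute)
  then show ?thesis
    using True by (intro that[of h g]) simp
next
  case False
  define b where "b = k - 2 * a"
  have "0 < b"
    using False assms(2) by (simp add: b_def)
  have lin: "core_dim (a + i) + i = b" if "i \<le> b" for i
  proof -
    have "core_dim (a + i) + a + (a + i) = k"
      using that assms(2) by (intro linear) (simp_all add: b_def)
    then show ?thesis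
      using assms(2) by (simp add: b_def)
  qed
  obtain K where K: "K \<subseteq> core (a + (b - 1))" "independent K" "finite K"
      "core (a + (b - 1)) \<subseteq> span K" "card K = core_dim (a + (b - 1))"
    using finite_B core_subset_span by (rule obtain_basis_in_finite_span)
  have "card K = 1"
    using lin[of "b - 1"] \<open>0 < b\<close> K(5) by simp
  then obtain h where "K = {h}"
    by (rule card_1_singletonE)
  moreover have "core (a + (b - 1)) = span K"
    using span_minimal[OF K(1) subspace_core] K(4) by blast
  ultimately have "core (a + (b - 1)) = span (iterates h 1)"
    unfolding iterates_1 by simp
  then have "core a = span (\<Union>t\<le>b - 1. (\<sigma> ^^ t) ` iterates h 1)"
  proof (rule core_descend)
    fix j
    assume "j < b - 1"
    then have "Suc (Suc j) \<le> b"
      by simp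
    then show "core_dim (a + j) + core_dim (Suc (Suc (a + j))) \<le> 2 * core_dim (Suc (a + j))"
      using lin[of j] lin[of "Suc j"] lin[of "Suc (Suc j)"] by simp
  qed
  then have "core (Suc (a - 1)) = span (iterates h b)"
    using UN_funpow_image_iterates[where l = 1 and i = "b - 1" and h = h] \<open>0 < b\<close> assms(1) by simp
  moreover have "core_dim (a - 1) = b + 2"
    using quadratic[of "a - 1"] assms(1,2) by (simp add: b_def)
  then have "core_dim (a - 1) + core_dim (Suc (Suc (a - 1))) \<le> 2 * core_dim (Suc (a - 1)) + 1"
    using lin[of 0] lin[of 1] \<open>0 < b\<close> assms(1) by simp
  ultimately obtain g where "core (a - 1) = span (insert g (iterates h b \<union> \<sigma> ` iterates h b))"
    by (rule core_step_insert)
  then have "core (a - 1) = span (iterates h (Suc b) \<union> iterates g 1)"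
    unfolding Un_image_iterates[OF \<open>0 < b\<close>] iterates_1 by simp
  then show ?thesis
    using assms(2) by (intro that[of h g]) (simp add: b_def Suc_diff_le)
qed

lemma dim_Int_image: "dim (C \<inter> \<sigma> ` C) = core_dim 1"
  using core_Int_image[of 0] dim_image[OF core_subset_L, of 1] by (simp add: core_0)

lemma dim_Int_image_Int_image: "dim ((C \<inter> \<sigma> ` C) \<inter> \<sigma> ` (C \<inter> \<sigma> ` C)) = core_dim 2"
proof -
  have "C \<inter> \<sigma> ` C = \<sigma> ` core 1"
    using core_Int_image[of 0] by (simp add: core_0)
  moreover have "\<sigma> ` core 1 \<inter> \<sigma> ` \<sigma> ` core 1 = \<sigma> ` (core 1 \<inter> \<sigma> ` core 1)"
    using inj_on_L core_subset_L[of 1] maps_L by (intro inj_on_image_Int[symmetric]) auto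
  moreover have "core 1 \<inter> \<sigma> ` core 1 = \<sigma> ` core 2"
    using core_Int_image[of 1] by (simp add: numeral_2_eq_2)
  moreover have "\<sigma> ` core 2 \<subseteq> L"
    using core_subset_L maps_L by blast
  ultimately show ?thesis
    using core_subset_L[of 2] by (simp add: dim_image)
qed

theorem iterates_decomposition:
  assumes dim_C: "dim C = k" and "2 < k" and dim_V: "dim (C \<inter> \<sigma> ` C) = k - 2"
  obtains a h g where "1 \<le> a" and "2 * a \<le> k" and "h \<in> C" and "g \<in> C"
    and "C = span (iterates h (k - a) \<union> iterates g a)"
    and "span (iterates h (k - a)) \<inter> span (iterates g a) = {0}"
    and "a = 1 \<longleftrightarrow> dim ((C \<inter> \<sigma> ` C) \<inter> \<sigma> ` (C \<inter> \<sigma> ` C)) + 3 = k"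
proof -
  have "core_dim 0 = k" "core_dim 1 + 2 = k"
    using dim_C dim_V dim_Int_image \<open>2 < k\<close> by (simp_all add: core_0)
  from convex_sequence_profile[of core_dim k, OF this \<open>2 < k\<close> core_dim_Suc_le core_dim_convex
      core_dim_Suc_eq_imp_zero]
  obtain a where a: "1 \<le> a" "2 * a \<le> k"
    and quadratic: "\<And>m. m \<le> a \<Longrightarrow> core_dim m + 2 * m = k"
    and linear: "\<And>m. a \<le> m \<Longrightarrow> m \<le> k - a \<Longrightarrow> core_dim m + a + m = k"
    by blast
  obtain h g where "core (a - 1) = span (iterates h (k - 2 * a + 1) \<union> iterates g 1)"
    using a quadratic linear by (rule core_before_turn_eq_span_iterates)
  then have "core 0 = span (\<Union>t\<le>a - 1. (\<sigma> ^^ t) ` (iterates h (k - 2 * a + 1) \<union> iterates g 1))"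
  proof (intro core_descend)
    fix j
    assume "j < a - 1"
    then have "j \<le> a" "Suc j \<le> a" "Suc (Suc j) \<le> a"
      by simp_all
    then show "core_dim (0 + j) + core_dim (Suc (Suc (0 + j))) \<le> 2 * core_dim (Suc (0 + j))"
      using quadratic[of j] quadratic[of "Suc j"] quadratic[of "Suc (Suc j)"] by simp
  qed simp
  also have "\<dots> = span (iterates h (k - a) \<union> iterates g a)"
  proof -
    have "k - 2 * a + 1 + (a - 1) = k - a" "1 + (a - 1) = a"
      using a by simp_all
    then show ?thesis
      using UN_funpow_image_iterates[of "k - 2 * a + 1" h "a - 1"] UN_funpow_image_iterates[of 1 g "a - 1"]
      by (simp only: image_Un UN_Un_distrib zero_less_one less_add_one)
  qed
  finally have C_eq: "C = span (iterates h (k - a) \<union> iterates g a)"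
    by (simp add: core_0)
  have "card (iterates h (k - a)) + card (iterates g a) \<le> dim (iterates h (k - a) \<union> iterates g a)"
    using card_iterates_le[of h "k - a"] card_iterates_le[of g a] C_eq dim_C a(2)
    by (simp add: dim_span)
  then have disjoint: "span (iterates h (k - a)) \<inter> span (iterates g a) = {0}"
    by (intro span_Int_span_eq_zero_if_card_le_dim finite_iterates)
  have "h \<in> C" "g \<in> C"
    using start_in_iterates[of "k - a" h] start_in_iterates[of a g] a C_eq
      span_base[of _ "iterates h (k - a) \<union> iterates g a"] by auto
  moreover have "a = 1 \<longleftrightarrow> core_dim 2 + 3 = k"
  proof (cases "a = 1")
    case True
    then have "a \<le> 2" "2 \<le> k - a"
      using \<open>2 < k\<close> by simp_all
    then show ?thesis
      using linear[of 2] True by simp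
  next
    case False
    then have "2 \<le> a"
      using a(1) by simp
    then show ?thesis
      using quadratic[of 2] False by simp
  qed
  ultimately show ?thesis
    by (intro that[OF a _ _ C_eq disjoint]) (simp_all add: dim_Int_image_Int_image)
qed

end

section \<open>The Frobenius twist of linearized polynomials\<close>

lemma sum_apply: "(sum f A :: 'a \<Rightarrow> 'b::comm_monoid_add) x = (\<Sum>i\<in>A. f i x)"
  by (induction A rule: infinite_finite_induct) auto

interpretation VS: vector_space "cscale :: 'a::field \<Rightarrow> (nat \<Rightarrow> 'a) \<Rightarrow> (nat \<Rightarrow> 'a)"
  by unfold_locales (auto simp: cscale_def fun_eq_iff algebra_simps)

definition coeff_basis :: "nat \<Rightarrow> (nat \<Rightarrow> 'a::field) set" where
  "coeff_basis n = (\<lambda>i m. if m = i then 1 else 0) ` {..<n}"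

lemma lin_polys_eq_span: "lin_polys n = Fspan (coeff_basis n :: (nat \<Rightarrow> 'a::field) set)"
proof (intro equalityI subsetI)
  fix a :: "nat \<Rightarrow> 'a"
  assume "a \<in> lin_polys n"
  then have "a = (\<Sum>i<n. cscale (a i) (\<lambda>m. if m = i then 1 else 0))"
    by (auto simp: fun_eq_iff sum_apply cscale_def lin_polys_def if_distrib cong: if_cong)
  also have "\<dots> \<in> Fspan (coeff_basis n)"
    by (intro VS.span_sum VS.span_scale VS.span_base) (auto simp: coeff_basis_def)
  finally show "a \<in> Fspan (coeff_basis n)" .
next
  fix a :: "nat \<Rightarrow> 'a"
  assume "a \<in> Fspan (coeff_basis n)"
  moreover have "Fspan (coeff_basis n) \<subseteq> lin_polys n"
    by (rule VS.span_minimal) (auto simp: coeff_basis_def lin_polys_def VS.subspace_def cscale_def)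
  ultimately show "a \<in> lin_polys n"
    by blast
qed

lemma frob_in_lin_polys: "frob q n j a \<in> lin_polys n"
  by (simp add: lin_polys_def frob_def)

lemma frob_cscale: "frob q n j (cscale c a) = cscale (c ^ (q ^ nat (j mod int n))) (frob q n j a)"
  by (auto simp: fun_eq_iff frob_def cscale_def power_mult_distrib)

lemma frob_0: "a \<in> lin_polys n \<Longrightarrow> frob q n 0 a = a"
  by (auto simp: fun_eq_iff frob_def lin_polys_def)

lemma frob_mod: "frob q n (j mod int n) = frob q n j"
  by (auto simp: fun_eq_iff frob_def mod_diff_right_eq)

context
  fixes p e q n :: nat
  assumes prime_p: "prime p" and e_ge_1: "e \<ge> 1" and q_eq: "q = p ^ e"
    and n_ge_1: "n \<ge> 1" and card_eq: "card (UNIV :: 'a::{field,finite} set) = q ^ n"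
begin

lemma q_ge_2: "q \<ge> 2"
proof -
  have "p \<le> p ^ e"
    using e_ge_1 prime_gt_0_nat[OF prime_p] by (intro self_le_power) auto
  then show ?thesis
    using prime_ge_2_nat[OF prime_p] q_eq by simp
qed

lemma CHAR_eq: "CHAR('a) = p"
  using CHAR_eq_if_card_eq_prime_power[OF prime_p, where 'a = 'a and m = "e * n"] card_eq q_eq
  by (simp add: power_mult)

lemma power_q_n: "(x :: 'a) ^ (q ^ n) = x"
  using power_card_eq_self[of x] card_eq by simp

lemma power_q_power_mod: "(x :: 'a) ^ (q ^ j) = x ^ (q ^ (j mod n))"
proof -
  have periodic: "x ^ (q ^ (n * i)) = x" for i
  proof (induction i)
    case (Suc i)
    have "x ^ (q ^ (n * Suc i)) = (x ^ (q ^ n)) ^ (q ^ (n * i))"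
      by (simp add: power_add power_mult)
    then show ?case
      using Suc by (simp add: power_q_n)
  qed simp
  have "q ^ j = q ^ (n * (j div n)) * q ^ (j mod n)"
    by (simp flip: power_add)
  then show ?thesis
    using periodic[of "j div n"] by (simp add: power_mult)
qed

lemma power_q_power_add: "((x :: 'a) + y) ^ (q ^ j) = x ^ (q ^ j) + y ^ (q ^ j)"
  using freshmans_dream'[where 'a = 'a and m = "q ^ j" and n = "e * j"] prime_p CHAR_eq q_eq
  by (simp add: power_mult)

lemma sum_power_q_power: "(sum f A :: 'a) ^ (q ^ j) = (\<Sum>i\<in>A. f i ^ (q ^ j))"
  using freshmans_dream_sum'[where 'a = 'a and m = "q ^ j" and n = "e * j"] prime_p CHAR_eq q_eq
  by (simp add: power_mult)

lemma frob_add: "frob q n j ((x :: nat \<Rightarrow> 'a) + y) = frob q n j x + frob q n j y"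
  by (auto simp: fun_eq_iff frob_def power_q_power_add)

lemma frob_frob:
  assumes "(x :: nat \<Rightarrow> 'a) \<in> lin_polys n"
  shows "frob q n j (frob q n l x) = frob q n (j + l) x"
proof
  fix m
  show "frob q n j (frob q n l x) m = frob q n (j + l) x m"
  proof (cases "m < n")
    case True
    define r where "r = nat ((int m - j) mod int n)"
    have r: "int r = (int m - j) mod int n" "r < n"
      using n_ge_1 by (simp_all add: r_def nat_less_iff)
    have idx: "(int r - l) mod int n = (int m - (j + l)) mod int n"
      unfolding r(1) by (simp add: mod_diff_left_eq algebra_simps)
    define e' where "e' = nat (l mod int n) + nat (j mod int n)"
    have "int (e' mod n) = (l mod int n + j mod int n) mod int n"
      using n_ge_1 by (simp add: e'_def zmod_int)
    then have exponent: "e' mod n = nat ((j + l) mod int n)"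
      by (simp add: mod_add_eq add.commute)
    have "frob q n j (frob q n l x) m = x (nat ((int r - l) mod int n)) ^ (q ^ e')"
      using True r(2) by (simp add: frob_def r_def[symmetric] e'_def power_mult[symmetric] power_add)
    also have "\<dots> = x (nat ((int r - l) mod int n)) ^ (q ^ (e' mod n))"
      by (rule power_q_power_mod)
    also have "\<dots> = frob q n (j + l) x m"
      using True by (simp add: frob_def idx exponent)
    finally show ?thesis .
  qed (simp add: frob_def)
qed

lemma funpow_frob: "(x :: nat \<Rightarrow> 'a) \<in> lin_polys n \<Longrightarrow> (frob q n s ^^ t) x = frob q n (s * int t) x"
  by (induction t) (simp_all add: frob_0 frob_frob algebra_simps)

lemma frob_semilinear_periodic:
  "semilinear_periodic cscale (frob q n s) (\<lambda>c :: 'a. c ^ (q ^ nat (s mod int n)))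
    (lin_polys n) (coeff_basis n) n"
proof
  show "surj (\<lambda>c :: 'a. c ^ (q ^ nat (s mod int n)))"
  proof (rule surjI)
    fix c :: 'a
    have "s mod int n < int n"
      using n_ge_1 by simp
    then have "nat (s mod int n) \<le> n"
      by linarith
    then have "q ^ (n - nat (s mod int n)) * q ^ nat (s mod int n) = q ^ n"
      by (simp flip: power_add)
    then show "(c ^ (q ^ (n - nat (s mod int n)))) ^ (q ^ nat (s mod int n)) = c"
      by (simp add: power_q_n flip: power_mult)
  qed
  show "(frob q n s ^^ n) x = x" if "x \<in> lin_polys n" for x :: "nat \<Rightarrow> 'a"
  proof -
    have "(frob q n s ^^ n) x = frob q n (s * int n) x"
      using that by (rule funpow_frob)
    also have "\<dots> = frob q n ((s * int n) mod int n) x"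
      by (simp only: frob_mod)
    finally show ?thesis
      using that by (simp add: frob_0)
  qed
qed (use n_ge_1 lin_polys_eq_span in \<open>simp_all add: frob_add frob_cscale frob_in_lin_polys coeff_basis_def\<close>)

lemma lin_eval_frob:
  assumes "(f :: nat \<Rightarrow> 'a) \<in> lin_polys n"
  shows "lin_eval q n (frob q n j f) x = lin_eval q n f x ^ (q ^ nat (j mod int n))"
proof -
  define j' where "j' = nat (j mod int n)"
  have j': "int j' = j mod int n"
    using n_ge_1 by (simp add: j'_def)
  have unshift_shift: "nat ((int ((i + j') mod n) - j) mod int n) = i" if "i < n" for i
  proof -
    have "int ((i + j') mod n) = (int i + j) mod int n"
      by (simp add: zmod_int j' mod_add_right_eq)
    then have "(int ((i + j') mod n) - j) mod int n = int i"
      using that by (simp add: mod_diff_left_eq)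
    then show ?thesis
      by simp
  qed
  have shift_unshift: "(nat ((int m - j) mod int n) + j') mod n = m" if "m < n" for m
  proof -
    have "int ((nat ((int m - j) mod int n) + j') mod n) = ((int m - j) mod int n + j mod int n) mod int n"
      using n_ge_1 by (simp add: zmod_int j')
    also have "\<dots> = int m"
      using that by (simp add: mod_add_eq)
    finally show ?thesis
      by simp
  qed
  have "lin_eval q n f x ^ (q ^ j') = (\<Sum>i<n. f i ^ (q ^ j') * x ^ (q ^ ((i + j') mod n)))"
    unfolding lin_eval_def sum_power_q_power
  proof (rule sum.cong[OF refl])
    fix i
    have "(x ^ (q ^ i)) ^ (q ^ j') = x ^ (q ^ (i + j'))"
      by (simp add: power_add flip: power_mult)
    also have "\<dots> = x ^ (q ^ ((i + j') mod n))"
      by (rule power_q_power_mod)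
    finally show "(f i * x ^ (q ^ i)) ^ (q ^ j') = f i ^ (q ^ j') * x ^ (q ^ ((i + j') mod n))"
      by (simp add: power_mult_distrib)
  qed
  also have "\<dots> = (\<Sum>m<n. frob q n j f m * x ^ (q ^ m))"
  proof (rule sum.reindex_bij_witness[where j = "\<lambda>i. (i + j') mod n" and i = "\<lambda>m. nat ((int m - j) mod int n)"])
    fix i
    assume "i \<in> {..<n}"
    then show "nat ((int ((i + j') mod n) - j) mod int n) = i"
      "(i + j') mod n \<in> {..<n}"
      "frob q n j f ((i + j') mod n) * x ^ (q ^ ((i + j') mod n)) = f i ^ (q ^ j') * x ^ (q ^ ((i + j') mod n))"
      using unshift_shift[of i] n_ge_1 by (simp_all add: frob_def j'_def)
  next
    fix m
    assume "m \<in> {..<n}"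
    then show "(nat ((int m - j) mod int n) + j') mod n = m" "nat ((int m - j) mod int n) \<in> {..<n}"
      using shift_unshift[of m] n_ge_1 by (simp_all add: nat_less_iff)
  qed
  finally show ?thesis
    unfolding lin_eval_def j'_def by (rule sym)
qed

lemma frob_fixed_imp_U1:
  assumes "gcd s (int n) = 1" and "(f :: nat \<Rightarrow> 'a) \<in> lin_polys n" and "frob q n s f = f"
  shows "f \<in> U1 q n"
proof -
  define j where "j = nat (s mod int n)"
  have "coprime (s mod int n) (int n)"
    using assms(1) n_ge_1 by (simp add: coprime_iff_gcd_eq_1)
  then have "coprime (int j) (int n)"
    using n_ge_1 by (simp add: j_def)
  then have "coprime j n"
    by simp
  then obtain u where "[j * u = 1] (mod n)"
    using cong_solve_coprime_nat by auto
  then have ju: "(j * u) mod n = 1 mod n"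
    by (simp add: cong_def)
  have "lin_eval q n f x \<in> subfield_q q" for x
  proof -
    define y where "y = lin_eval q n f x"
    have "y ^ (q ^ j) = y"
      using lin_eval_frob[OF assms(2), of s x] assms(3) by (simp add: y_def j_def)
    then have iter: "y ^ (q ^ (j * v)) = y" for v
    proof (induction v)
      case (Suc v)
      have "y ^ (q ^ (j * Suc v)) = (y ^ (q ^ (j * v))) ^ (q ^ j)"
        by (simp add: power_add mult.commute flip: power_mult)
      then show ?case
        using Suc by simp
    qed simp
    have "y ^ q = y ^ (q ^ (1 mod n))"
      using power_q_power_mod[of y 1] by simp
    also have "\<dots> = y ^ (q ^ (j * u))"
      using power_q_power_mod[of y "j * u"] ju by simp
    finally show ?thesis
      using iter by (simp add: subfield_q_def y_def)
  qed
  then have "rank_le_one q n f"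
    unfolding rank_le_one_def by (intro exI[of _ 1]) auto
  then show ?thesis
    using assms(2) by (simp add: U1_def)
qed

lemma frob_trace_nonzero:
  assumes "gcd s (int n) = 1" and "(u :: nat \<Rightarrow> 'a) \<in> lin_polys n" and "u \<noteq> 0"
  shows "\<exists>c. (\<Sum>i<n. frob q n (s * int i) (cscale c u)) \<noteq> 0"
proof -
  obtain m where m: "u m \<noteq> 0"
    using assms(3) by (auto simp: fun_eq_iff)
  then have "m < n"
    using assms(2) by (auto simp: lin_polys_def not_less[symmetric])
  define d where "d i = q ^ nat ((s * int i) mod int n)" for i
  define c where "c i = u (nat ((int m - s * int i) mod int n)) ^ d i" for i
  have coeff_m: "(\<Sum>i<n. frob q n (s * int i) (cscale x u)) m = (\<Sum>i<n. c i * x ^ d i)" for x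
    using \<open>m < n\<close> by (simp add: sum_apply frob_def cscale_def c_def d_def power_mult_distrib mult.commute)
  have "\<exists>x. (\<Sum>i<n. c i * x ^ d i) \<noteq> 0"
  proof (rule exists_nonroot_sum_powers)
    show "finite {..<n}" "0 \<in> {..<n}"
      using n_ge_1 by auto
    show "c 0 \<noteq> 0"
      using m \<open>m < n\<close> by (simp add: c_def d_def)
    show "i = 0" if "i \<in> {..<n}" and "d i = d 0" for i
    proof -
      have "nat ((s * int i) mod int n) = 0"
        using that(2) q_ge_2 by (simp add: d_def)
      moreover have "0 \<le> (s * int i) mod int n"
        using n_ge_1 by simp
      ultimately have "int n dvd s * int i"
        by (simp add: dvd_eq_mod_eq_0)
      moreover have "coprime (int n) s"
        using assms(1) by (simp add: coprime_iff_gcd_eq_1 gcd.commute)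
      ultimately have "n dvd i"
        by (simp add: coprime_dvd_mult_right_iff)
      then show "i = 0"
        using that(1) by (auto dest: dvd_imp_le)
    qed
    show "d i < card (UNIV :: 'a set)" if "i \<in> {..<n}" for i
    proof -
      have "nat ((s * int i) mod int n) < n"
        using n_ge_1 by (simp add: nat_less_iff)
      then show ?thesis
        using q_ge_2 card_eq by (simp add: d_def power_strict_increasing)
    qed
  qed
  then obtain x where "(\<Sum>i<n. frob q n (s * int i) (cscale x u)) m \<noteq> 0"
    using coeff_m by auto
  then show ?thesis
    by (intro exI[of _ x]) auto
qed

lemma frob_no_invariant_subspace:
  assumes gcd: "gcd s (int n) = 1" and C: "C \<subseteq> lin_polys n" "C \<inter> U1 q n = {0}"
    and U: "Fsubspace U" "U \<subseteq> C" "frob q n s ` U \<subseteq> U"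
  shows "U = ({0} :: (nat \<Rightarrow> 'a) set)"
proof (rule ccontr)
  interpret \<sigma>: semilinear_periodic cscale "frob q n s" "\<lambda>c :: 'a. c ^ (q ^ nat (s mod int n))"
      "lin_polys n" "coeff_basis n" n
    by (rule frob_semilinear_periodic)
  assume "U \<noteq> {0}"
  then obtain u where u: "u \<in> U" "u \<noteq> 0"
    using VS.subspace_0[OF U(1)] by blast
  have "u \<in> lin_polys n"
    using u(1) U(2) C(1) by blast
  then obtain c where c: "(\<Sum>i<n. frob q n (s * int i) (cscale c u)) \<noteq> 0"
    using frob_trace_nonzero[OF gcd _ u(2)] by blast
  have cu: "cscale c u \<in> lin_polys n"
    using VS.subspace_scale[OF \<sigma>.subspace_L \<open>u \<in> lin_polys n\<close>] .
  define y where "y = (\<Sum>i<n. (frob q n s ^^ i) (cscale c u))"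
  have "y \<noteq> 0"
    using c funpow_frob[OF cu] by (simp add: y_def)
  have "(frob q n s ^^ i) (cscale c u) \<in> U" for i
    using VS.subspace_scale[OF U(1) u(1)] U(3) by (induction i) auto
  then have "y \<in> U"
    unfolding y_def by (intro VS.subspace_sum[OF U(1)])
  moreover have "frob q n s y = y"
    unfolding y_def by (rule \<sigma>.sum_funpow_fixed[OF cu])
  then have "y \<in> U1 q n"
    using \<open>y \<in> U\<close> U(2) C(1) gcd by (intro frob_fixed_imp_U1) auto
  ultimately show False
    using \<open>y \<noteq> 0\<close> U(2) C(2) by blast
qed

lemma frob_twisted_subspace:
  assumes "gcd s (int n) = 1" and "C \<subseteq> lin_polys n" and "Fsubspace C" and "C \<inter> U1 q n = {0}"
  shows "twisted_subspace cscale (frob q n s) (\<lambda>c :: 'a. c ^ (q ^ nat (s mod int n)))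
    (lin_polys n) (coeff_basis n) n C"
  unfolding twisted_subspace_def twisted_subspace_axioms_def
  using frob_semilinear_periodic assms frob_no_invariant_subspace[OF assms(1,2,4)] by blast

lemma iterates_frob:
  assumes "(h :: nat \<Rightarrow> 'a) \<in> lin_polys n" and "1 \<le> l"
  shows "semilinear_periodic.iterates (frob q n s) h l = (\<lambda>t. frob q n (s * int t) h) ` {0..l - 1}"
proof -
  have "{0..l - 1} = {..<l}"
    using assms(2) by auto
  then show ?thesis
    using semilinear_periodic.iterates_def[OF frob_semilinear_periodic] funpow_frob[OF assms(1)]
    by simp
qed

end

theorem theorem3p6:
  fixes q n k :: nat and s :: int and C :: "(nat \<Rightarrow> 'a::{field,finite}) set"
    and p e :: nat
  assumes "prime p" and "e \<ge> 1" and "q = p ^ e"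
    and "n \<ge> 1" and "card (UNIV :: 'a set) = q ^ n"
    and "gcd s (int n) = 1"
    and "C \<subseteq> lin_polys n" and "Fsubspace C" and "Fdim C = k" and "k > 2"
    and "Fdim (C \<inter> frob_set q n s C) = k - 2"
    and "C \<inter> U1 q n = {0}"
  shows
    "(let V = C \<inter> frob_set q n s C in
      (int (Fdim (V \<inter> frob_set q n s V)) = int k - 3 \<longrightarrow>
        (\<exists>f g. f \<in> C \<and> g \<in> C \<and>
           C = Fspan ((\<lambda>t. frob q n (s * int t) f) ` {0..k-2} \<union> {g}) \<and>
           Fspan ((\<lambda>t. frob q n (s * int t) f) ` {0..k-2}) \<inter> Fspan {g} = {0}))
      \<and>
      (int (Fdim (V \<inter> frob_set q n s V)) = int k - 4 \<longrightarrow>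
        (\<exists>f g i j. f \<in> C \<and> g \<in> C \<and> i \<ge> 2 \<and> j \<ge> 2 \<and> i + j = k \<and>
           C = Fspan ((\<lambda>t. frob q n (s * int t) f) ` {0..i-1}
                    \<union> (\<lambda>t. frob q n (s * int t) g) ` {0..j-1}) \<and>
           Fspan ((\<lambda>t. frob q n (s * int t) f) ` {0..i-1})
             \<inter> Fspan ((\<lambda>t. frob q n (s * int t) g) ` {0..j-1}) = {0})))"
proof -
  let ?\<sigma> = "frob q n s"
  interpret twisted_subspace cscale ?\<sigma> "\<lambda>c :: 'a. c ^ (q ^ nat (s mod int n))" "lin_polys n"
      "coeff_basis n" n C
    by (rule frob_twisted_subspace[OF assms(1-8,12)])
  obtain a h g where a: "1 \<le> a" "2 * a \<le> k" and "h \<in> C" "g \<in> C"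
    and C_eq: "C = Fspan (iterates h (k - a) \<union> iterates g a)"
    and disjoint: "Fspan (iterates h (k - a)) \<inter> Fspan (iterates g a) = {0}"
    and a_eq_1: "a = 1 \<longleftrightarrow> Fdim (C \<inter> ?\<sigma> ` C \<inter> ?\<sigma> ` (C \<inter> ?\<sigma> ` C)) + 3 = k"
    using iterates_decomposition[OF assms(9,10) assms(11)[unfolded frob_set_def]] by blast
  have h_iter: "iterates h (k - a) = (\<lambda>t. frob q n (s * int t) h) ` {0..k - a - 1}"
    and g_iter: "iterates g a = (\<lambda>t. frob q n (s * int t) g) ` {0..a - 1}"
    using iterates_frob[OF assms(1-5)] \<open>h \<in> C\<close> \<open>g \<in> C\<close> assms(7) a by auto
  show ?thesis
    unfolding Let_def frob_set_def
  proof (intro conjI impI)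
    assume "int (Fdim (C \<inter> ?\<sigma> ` C \<inter> ?\<sigma> ` (C \<inter> ?\<sigma> ` C))) = int k - 3"
    then have "a = 1"
      using a_eq_1 by simp
    then have "iterates g a = {g}" "k - a - 1 = k - 2"
      by (simp_all only: iterates_1 diff_diff_left one_add_one)
    then show "\<exists>f g. f \<in> C \<and> g \<in> C \<and>
        C = Fspan ((\<lambda>t. frob q n (s * int t) f) ` {0..k - 2} \<union> {g}) \<and>
        Fspan ((\<lambda>t. frob q n (s * int t) f) ` {0..k - 2}) \<inter> Fspan {g} = {0}"
      using \<open>h \<in> C\<close> \<open>g \<in> C\<close> C_eq disjoint h_iter by metis
  next
    assume "int (Fdim (C \<inter> ?\<sigma> ` C \<inter> ?\<sigma> ` (C \<inter> ?\<sigma> ` C))) = int k - 4"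
    then have "2 \<le> a" "2 \<le> k - a" "k - a + a = k"
      using a_eq_1 a by auto
    then show "\<exists>f g i j. f \<in> C \<and> g \<in> C \<and> 2 \<le> i \<and> 2 \<le> j \<and> i + j = k \<and>
        C = Fspan ((\<lambda>t. frob q n (s * int t) f) ` {0..i - 1} \<union> (\<lambda>t. frob q n (s * int t) g) ` {0..j - 1}) \<and>
        Fspan ((\<lambda>t. frob q n (s * int t) f) ` {0..i - 1}) \<inter> Fspan ((\<lambda>t. frob q n (s * int t) g) ` {0..j - 1}) = {0}"
      using \<open>h \<in> C\<close> \<open>g \<in> C\<close> C_eq disjoint h_iter g_iter by metis
  qed
qed

end
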